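(* Let $A\subset\mathbb R$ be an open interval of length $R>2$ and let $\psi:A\to\mathbb C$ be a regular $\mathbb C$-supershift on $A$. Let $0<\delta<R-2$, let $\theta$ be a smooth function on $\mathbb R$ with support in $[0,\delta]$, and let $A_\delta=\{a\in A:\ a-\delta\in A\}$. Then the function $$(\psi*\theta)(a)=\int_0^\delta\theta(\alpha)\,\psi(a-\alpha)\,d\alpha,\qquad a\in A_\delta,$$ is smooth and is a regular $\mathbb C$-supershift on $A_\delta$.
   Context: For an open interval $A\subset\mathbb R$ of length $R>2$ (possibly infinite), set $\mathbb A=\{(a,a')\in\mathbb R\times A:\ a'+[-1,1]\subset A,\ a+a'\in A\}$. For a sequence $\boldsymbol\epsilon=(\epsilon_N)_{N\ge1}$ with $\epsilon_N\in[0,1)$ and $\epsilon_N\to0$, put $h^{\boldsymbol\epsilon}_{N,\nu}=1-2\,\frac{\nu+\epsilon_N(N-\nu)}{N}$ for $0\le\nu\le N$. For a continuous $\psi:A\to\mathbb C$ and $(a,a')\in\mathbb A$ set $$S_N^{\boldsymbol\epsilon}[\psi](a,a')=\sum_{\nu=0}^N\binom N\nu\Big(\frac{1+a}2\Big)^{N-\nu}\Big(\frac{1-a}2\Big)^{\nu}\psi\big(a'+h^{\boldsymbol\epsilon}_{N,\nu}\big).$$ A continuous $\psi:A\to\mathbb C$ is called a regular $\mathbb C$-supershift on $A$ if (1) for every such sequence $\boldsymbol\epsilon$, $S_N^{\boldsymbol\epsilon}[\psi](a,a')\to\psi(a+a')$ as $N\to\infty$ uniformly on compact subsets of $\mathbb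 A$; and (2) for every family $\{\boldsymbol\epsilon_{\iota'}=(\epsilon_{\iota',N})_{N\ge1}:\iota'\in I'\}$ of such sequences with $\sup_{\iota'\in I'}\epsilon_{\iota',N}\to0$ as $N\to\infty$, the convergence in (1) is uniform with respect to $\iota'\in I'$ on each compact subset of $\mathbb A$. *)

theory Defs
  imports "HOL-Analysis.Analysis"
begin

definition ointerval :: "ereal \<Rightarrow> ereal \<Rightarrow> real set" where
  "ointerval lo hi = {x. lo < ereal x \<and> ereal x < hi}"

definition dom_A :: "real set \<Rightarrow> (real \<times> real) set" where
  "dom_A A = {(a, a'). a' \<in> A \<and> {a' - 1 .. a' + 1} \<subseteq> A \<and> a + a' \<in> A}"

definition admissible_seq :: "(nat \<Rightarrow> real) \<Rightarrow> bool" where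
  "admissible_seq e \<longleftrightarrow> (\<forall>N\<ge>1. 0 \<le> e N \<and> e N < 1) \<and> e \<longlonglongrightarrow> 0"

definition h_eps :: "(nat \<Rightarrow> real) \<Rightarrow> nat \<Rightarrow> nat \<Rightarrow> real" where
  "h_eps e N \<nu> = 1 - 2 * ((real \<nu> + e N * (real N - real \<nu>)) / real N)"

definition S_eps :: "(nat \<Rightarrow> real) \<Rightarrow> (real \<Rightarrow> complex) \<Rightarrow> nat \<Rightarrow> real \<times> real \<Rightarrow> complex" where
  "S_eps e \<psi> N p = (case p of (a, a') \<Rightarrow>
     (\<Sum>\<nu>=0..N. complex_of_real (real (N choose \<nu>) * ((1 + a) / 2) ^ (N - \<nu>) * ((1 - a) / 2) ^ \<nu>)
        * \<psi> (a' + h_eps e N \<nu>)))"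

definition regular_supershift :: "real set \<Rightarrow> (real \<Rightarrow> complex) \<Rightarrow> bool" where
  "regular_supershift A \<psi> \<longleftrightarrow>
     continuous_on A \<psi> \<and>
     (\<forall>e. admissible_seq e \<longrightarrow>
        (\<forall>K. compact K \<and> K \<subseteq> dom_A A \<longrightarrow>
           uniform_limit K (\<lambda>N p. S_eps e \<psi> N p) (\<lambda>p. \<psi> (fst p + snd p)) sequentially)) \<and>
     (\<forall>E :: (nat \<Rightarrow> real) set.
        (\<forall>e\<in>E. admissible_seq e) \<and>
        (\<forall>\<eta>>0. \<forall>\<^sub>F N in sequentially. \<forall>e\<in>E. e N < \<eta>) \<longrightarrow>
        (\<forall>K. compact K \<and> K \<subseteq> dom_A A \<longrightarrow>
           (\<forall>\<eta>>0. \<forall>\<^sub>F N in sequentially. \<forall>e\<in>E. \<forall>p\<in>K.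
               dist (S_eps e \<psi> N p) (\<psi> (fst p + snd p)) < \<eta>)))"

definition smooth_on :: "real set \<Rightarrow> (real \<Rightarrow> 'a::real_normed_vector) \<Rightarrow> bool" where
  "smooth_on S f \<longleftrightarrow> (\<exists>D :: nat \<Rightarrow> real \<Rightarrow> 'a. (\<forall>x\<in>S. D 0 x = f x) \<and>
      (\<forall>n. \<forall>x\<in>S. (D n has_vector_derivative D (Suc n) x) (at x)))"

end

theory Submission imports Defs begin

text \<open>
  After the substitution t = a - \<alpha>, near a given point the convolution \<psi> * \<theta> is an integral
  over a fixed interval in which a enters only through \<theta>(a - t); so every derivative falls on
  \<theta>, and \<psi> * \<theta> is smooth with derivatives \<psi> * \<theta>^(n).
  The supershift operator S_N is a finite linear combination of translates in the second variable,
  so it commutes with convolution: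
  S_N[\<psi> * \<theta>](a, a') - (\<psi> * \<theta>)(a + a') = \<integral> \<theta>(\<alpha>) (S_N[\<psi>](a, a' - \<alpha>) - \<psi>(a + a' - \<alpha>)) d\<alpha>
  over [0, \<delta>]. When (a, a') runs through a compact subset of the domain attached to A_\<delta> and
  \<alpha> through [0, \<delta>], the points (a, a' - \<alpha>) run through a compact subset of the domain attached
  to A, where S_N[\<psi>] converges uniformly (also uniformly in an admissible family); integrating
  against the bounded \<theta> transfers this convergence to \<psi> * \<theta>.
\<close>

lemma ointerval_eq_vimage: "ointerval lo hi = ereal -` {lo<..<hi}"
  by (auto simp: ointerval_def)

lemma open_ointerval: "open (ointerval lo hi)"
  unfolding ointerval_eq_vimage by (intro open_ereal_vimage open_greaterThanLessThan)

lemma is_interval_ointerval: "is_interval (ointerval lo hi)"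
  unfolding is_interval_1 ointerval_def
  by (metis (mono_tags, lifting) ereal_less_eq(3) le_less_trans less_le_trans mem_Collect_eq)

lemma diff_mem_interval:
  fixes A :: "real set"
  assumes "is_interval A" "y \<in> A" "y - \<delta> \<in> A" "\<alpha> \<in> {0..\<delta>}"
  shows "y - \<alpha> \<in> A"
  by (rule mem_is_interval_1_I[OF assms(1,3,2)]) (use assms(4) in auto)

lemma smooth_on_imp_continuous_on:
  fixes f :: "real \<Rightarrow> 'a::real_normed_vector"
  assumes "smooth_on S f"
  shows "continuous_on S f"
proof -
  obtain D :: "nat \<Rightarrow> real \<Rightarrow> 'a" where D0: "\<And>x. x \<in> S \<Longrightarrow> D 0 x = f x"
    and D: "\<And>x. x \<in> S \<Longrightarrow> (D 0 has_vector_derivative D (Suc 0) x) (at x)"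
    using assms unfolding smooth_on_def by blast
  have "continuous_on S (D 0)"
    using D has_vector_derivative_continuous by (blast intro: continuous_at_imp_continuous_on)
  then show ?thesis using D0 by (rule continuous_on_eq)
qed

lemma derivatives_vanish_outside_support:
  fixes D :: "nat \<Rightarrow> real \<Rightarrow> real"
  assumes D: "\<And>n x. (D n has_real_derivative D (Suc n) x) (at x)"
    and supp: "\<And>x. x \<notin> {a..b} \<Longrightarrow> D 0 x = 0"
    and x: "x \<notin> {a..b}"
  shows "D n x = 0"
proof -
  define U where "U = {..<a} \<union> {b<..}"
  have "open U" "x \<in> U" using x by (auto simp: U_def)
  have "D n y = 0" if "y \<in> U" for y
    using that
  proof (induction n arbitrary: y)
    case 0 then show ?case using supp by (auto simp: U_def)
  next
    case (Suc n)
    have "((\<lambda>_. 0) has_real_derivative 0) (at y)" by simp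
    then have "(D n has_real_derivative 0) (at y)"
      by (rule has_field_derivative_transform_within_open[OF _ \<open>open U\<close> Suc.prems])
         (use Suc.IH in auto)
    then show ?case using D DERIV_unique by blast
  qed
  then show ?thesis using \<open>x \<in> U\<close> .
qed

definition convolution :: "real \<Rightarrow> (real \<Rightarrow> real) \<Rightarrow> (real \<Rightarrow> complex) \<Rightarrow> real \<Rightarrow> complex" where
  "convolution \<delta> \<theta> \<psi> a = integral {0..\<delta>} (\<lambda>\<alpha>. complex_of_real (\<theta> \<alpha>) * \<psi> (a - \<alpha>))"

lemma has_integral_convolution:
  assumes A: "is_interval A" "continuous_on A \<psi>" and \<theta>: "continuous_on UNIV \<theta>"
    and y: "y \<in> A" "y - \<delta> \<in> A"
  shows "((\<lambda>\<alpha>. complex_of_real (\<theta> \<alpha>) * \<psi> (y - \<alpha>)) has_integral convolution \<delta> \<theta> \<psi> y) {0..\<delta>}"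
proof -
  have "(\<lambda>\<alpha>. y - \<alpha>) ` {0..\<delta>} \<subseteq> A" by (intro image_subsetI diff_mem_interval[OF A(1) y])
  then have "continuous_on {0..\<delta>} (\<lambda>\<alpha>. complex_of_real (\<theta> \<alpha>) * \<psi> (y - \<alpha>))"
    by (intro continuous_on_mult continuous_on_of_real continuous_on_subset[OF \<theta>]
        continuous_on_compose2[OF A(2)] continuous_intros) auto
  then show ?thesis
    unfolding convolution_def by (intro integrable_integral integrable_continuous_interval)
qed

lemma convolution_eq_integral_over:
  fixes \<psi> :: "real \<Rightarrow> complex"
  assumes \<psi>: "continuous_on {c..d} \<psi>" and g: "continuous_on UNIV g"
    and supp: "\<And>x. x \<notin> {0..\<delta>} \<Longrightarrow> g x = 0"
    and a: "c \<le> a - \<delta>" "a \<le> d"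
  shows "convolution \<delta> g \<psi> a = integral {c..d} (\<lambda>t. complex_of_real (g (a - t)) * \<psi> t)"
proof -
  define f where "f = (\<lambda>t. complex_of_real (g (a - t)) * \<psi> t)"
  have "convolution \<delta> g \<psi> a = integral {0..\<delta>} (\<lambda>x. f (a - x))"
    by (simp add: convolution_def f_def)
  also have "\<dots> = integral {-\<delta>..0} (f \<circ> (+) a)"
    using Henstock_Kurzweil_Integration.integral_reflect_real[where f="\<lambda>x. f (a + x)" and a="-\<delta>" and b=0]
    by (simp only: o_def minus_zero minus_minus diff_conv_add_uminus)
  also have "\<dots> = integral {a - \<delta>..a} f"
    using integral_shift_Icc_real[where a="-\<delta>" and b=0 and c=a] by (simp add: add.commute)
  finally have conv: "convolution \<delta> g \<psi> a = integral {a - \<delta>..a} f" .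
  have "continuous_on {a - \<delta>..a} f"
    unfolding f_def using a
    by (intro continuous_on_mult continuous_on_of_real continuous_on_compose2[OF g]
        continuous_on_subset[OF \<psi>] continuous_intros) auto
  then have "(f has_integral integral {a - \<delta>..a} f) {a - \<delta>..a}"
    by (intro integrable_integral integrable_continuous_interval)
  then have "(f has_integral integral {a - \<delta>..a} f) {c..d}"
    by (rule has_integral_on_superset) (use a supp in \<open>auto simp: f_def\<close>)
  then show ?thesis using conv by (simp add: integral_unique f_def)
qed

lemma open_interval_Icc_around:
  fixes A :: "real set"
  assumes "open A" "is_interval A" "u \<in> A" "v \<in> A"
  obtains c d where "c < u" "v < d" "{c..d} \<subseteq> A"
proof -
  obtain e1 where e1: "e1 > 0" "ball u e1 \<subseteq> A" using assms(1,3) openE by blast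
  obtain e2 where e2: "e2 > 0" "ball v e2 \<subseteq> A" using assms(1,4) openE by blast
  have "u - e1 / 2 \<in> ball u e1" "v + e2 / 2 \<in> ball v e2" using e1 e2 by (auto simp: dist_real_def)
  then have "u - e1 / 2 \<in> A" "v + e2 / 2 \<in> A" using e1(2) e2(2) by (auto dest: subsetD)
  then have "{u - e1 / 2..v + e2 / 2} \<subseteq> A"
    by (intro subsetI mem_is_interval_1_I[OF assms(2) \<open>u - e1 / 2 \<in> A\<close> \<open>v + e2 / 2 \<in> A\<close>]) auto
  then show ?thesis using e1 e2 by (intro that) auto
qed

lemma has_vector_derivative_convolution:
  fixes \<psi> :: "real \<Rightarrow> complex"
  assumes A: "open A" "is_interval A" "continuous_on A \<psi>"
    and g: "\<And>x. (g has_real_derivative g' x) (at x)" "continuous_on UNIV g'"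
    and supp: "\<And>x. x \<notin> {0..\<delta>} \<Longrightarrow> g x = 0" "\<And>x. x \<notin> {0..\<delta>} \<Longrightarrow> g' x = 0"
    and x: "x \<in> A" "x - \<delta> \<in> A"
  shows "(convolution \<delta> g \<psi> has_vector_derivative convolution \<delta> g' \<psi> x) (at x)"
proof -
  have cg: "continuous_on UNIV g"
    by (intro continuous_at_imp_continuous_on ballI DERIV_isCont[OF g(1)])
  obtain c d where cd: "c < x - \<delta>" "x < d" "cbox c d \<subseteq> A"
    using open_interval_Icc_around[OF A(1,2) x(2,1)] by auto
  \<comment> \<open>On U the convolution is an integral over the fixed interval [c, d], so Leibniz's rule applies.\<close>
  define U where "U = {c + \<delta><..<d}"
  have U: "x \<in> U" "open U" "convex U" using cd by (auto simp: U_def)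
  have rep: "convolution \<delta> h \<psi> a = integral (cbox c d) (\<lambda>t. complex_of_real (h (a - t)) * \<psi> t)"
    if "a \<in> U" "continuous_on UNIV h" "\<And>x. x \<notin> {0..\<delta>} \<Longrightarrow> h x = 0" for a h
    using convolution_eq_integral_over[OF continuous_on_subset[OF A(3)] that(2,3)] cd(3) that(1)
    by (auto simp: U_def)
  have "((\<lambda>a. integral (cbox c d) (\<lambda>t. complex_of_real (g (a - t)) * \<psi> t)) has_vector_derivative
          integral (cbox c d) (\<lambda>t. complex_of_real (g' (x - t)) * \<psi> t)) (at x within U)"
  proof (rule leibniz_rule_vector_derivative[OF _ _ _ U(1,3)])
    fix a t
    have "((\<lambda>a. g (a - t)) has_real_derivative g' (a - t) * 1) (at a within U)"
      by (intro DERIV_chain2[OF g(1)] derivative_eq_intros) auto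
    then show "((\<lambda>a. complex_of_real (g (a - t)) * \<psi> t) has_vector_derivative
          complex_of_real (g' (a - t)) * \<psi> t) (at a within U)"
      by (auto intro!: has_vector_derivative_mult_left has_vector_derivative_of_real)
  next
    fix a
    show "(\<lambda>t. complex_of_real (g (a - t)) * \<psi> t) integrable_on cbox c d"
      by (intro integrable_continuous continuous_on_mult continuous_on_of_real
          continuous_on_compose2[OF cg] continuous_on_subset[OF A(3) cd(3)] continuous_intros) auto
  next
    show "continuous_on (U \<times> cbox c d) (\<lambda>(a, t). complex_of_real (g' (a - t)) * \<psi> t)"
      unfolding case_prod_beta
      by (intro continuous_on_mult continuous_on_of_real continuous_on_compose2[OF g(2)]
          continuous_on_compose2[OF A(3)] continuous_intros) (use cd(3) in auto)
  qed
  then have "((\<lambda>a. integral (cbox c d) (\<lambda>t. complex_of_real (g (a - t)) * \<psi> t)) has_vector_derivative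
          convolution \<delta> g' \<psi> x) (at x)"
    using rep[OF U(1) g(2) supp(2)] at_within_open[OF U(1,2)] by simp
  then show ?thesis
    by (rule has_vector_derivative_transform_within_open[OF _ U(2,1)]) (use rep[OF _ cg supp(1)] in simp)
qed

lemma smooth_on_convolution:
  fixes \<psi> :: "real \<Rightarrow> complex"
  assumes A: "open A" "is_interval A" "continuous_on A \<psi>"
    and \<theta>: "smooth_on UNIV \<theta>" "\<And>x. x \<notin> {0..\<delta>} \<Longrightarrow> \<theta> x = 0"
  shows "smooth_on {a \<in> A. a - \<delta> \<in> A} (convolution \<delta> \<theta> \<psi>)"
proof -
  obtain D :: "nat \<Rightarrow> real \<Rightarrow> real" where D0: "D 0 = \<theta>"
    and D: "\<And>n x. (D n has_real_derivative D (Suc n) x) (at x)"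
    using \<theta>(1) by (auto simp: smooth_on_def has_real_derivative_iff_has_vector_derivative fun_eq_iff)
  have cont: "continuous_on UNIV (D n)" for n
    by (intro continuous_at_imp_continuous_on ballI DERIV_isCont[OF D])
  have supp: "D n x = 0" if "x \<notin> {0..\<delta>}" for n x
    using derivatives_vanish_outside_support[where D=D and a=0 and b=\<delta>, OF D] \<theta>(2) that
    unfolding D0 by blast
  have "(convolution \<delta> (D n) \<psi> has_vector_derivative convolution \<delta> (D (Suc n)) \<psi> x) (at x)"
    if "x \<in> {a \<in> A. a - \<delta> \<in> A}" for n x
    using has_vector_derivative_convolution[OF A D cont supp supp] that by blast
  then show ?thesis
    unfolding smooth_on_def by (intro exI[of _ "\<lambda>n. convolution \<delta> (D n) \<psi>"]) (simp add: D0)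
qed

lemma abs_h_eps_le_one:
  assumes "N \<ge> 1" "0 \<le> e N" "e N \<le> 1" "\<nu> \<le> N"
  shows "\<bar>h_eps e N \<nu>\<bar> \<le> 1"
proof -
  have "0 \<le> e N * (real N - real \<nu>)" "e N * (real N - real \<nu>) \<le> real N - real \<nu>"
    using assms by (auto intro: mult_left_le_one_le)
  then have "0 \<le> (real \<nu> + e N * (real N - real \<nu>)) / real N"
      "(real \<nu> + e N * (real N - real \<nu>)) / real N \<le> 1"
    using assms by (auto simp: field_simps)
  then show ?thesis unfolding h_eps_def by linarith
qed

lemma S_eps_convolution_has_integral:
  fixes \<psi> :: "real \<Rightarrow> complex"
  assumes A: "is_interval A" "continuous_on A \<psi>" and \<theta>: "continuous_on UNIV \<theta>"
    and h: "\<And>\<nu>. \<nu> \<le> N \<Longrightarrow> a' + h_eps e N \<nu> \<in> {y \<in> A. y - \<delta> \<in> A}"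
    and aa': "a + a' \<in> {y \<in> A. y - \<delta> \<in> A}"
  shows "((\<lambda>\<alpha>. complex_of_real (\<theta> \<alpha>) * (S_eps e \<psi> N (a, a' - \<alpha>) - \<psi> (a + (a' - \<alpha>))))
          has_integral (S_eps e (convolution \<delta> \<theta> \<psi>) N (a, a') - convolution \<delta> \<theta> \<psi> (a + a'))) {0..\<delta>}"
proof -
  define c where "c \<nu> = complex_of_real (real (N choose \<nu>) * ((1 + a) / 2) ^ (N - \<nu>) * ((1 - a) / 2) ^ \<nu>)" for \<nu>
  have "((\<lambda>\<alpha>. \<Sum>\<nu>=0..N. c \<nu> * (complex_of_real (\<theta> \<alpha>) * \<psi> (a' + h_eps e N \<nu> - \<alpha>))) has_integral
          (\<Sum>\<nu>=0..N. c \<nu> * convolution \<delta> \<theta> \<psi> (a' + h_eps e N \<nu>))) {0..\<delta>}"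
    by (intro has_integral_sum has_integral_mult_right has_integral_convolution[OF A \<theta>]) (use h in auto)
  moreover have "((\<lambda>\<alpha>. complex_of_real (\<theta> \<alpha>) * \<psi> (a + a' - \<alpha>)) has_integral
          convolution \<delta> \<theta> \<psi> (a + a')) {0..\<delta>}"
    using has_integral_convolution[OF A \<theta>] aa' by blast
  ultimately have "((\<lambda>\<alpha>. (\<Sum>\<nu>=0..N. c \<nu> * (complex_of_real (\<theta> \<alpha>) * \<psi> (a' + h_eps e N \<nu> - \<alpha>)))
          - complex_of_real (\<theta> \<alpha>) * \<psi> (a + a' - \<alpha>)) has_integral
          (\<Sum>\<nu>=0..N. c \<nu> * convolution \<delta> \<theta> \<psi> (a' + h_eps e N \<nu>)) - convolution \<delta> \<theta> \<psi> (a + a')) {0..\<delta>}"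
    by (rule has_integral_diff)
  then show ?thesis
    by (simp add: S_eps_def c_def sum_distrib_left algebra_simps)
qed

lemma dom_A_shift:
  fixes A :: "real set"
  assumes A: "is_interval A" and p: "(a, a') \<in> dom_A {y \<in> A. y - \<delta> \<in> A}" and \<alpha>: "\<alpha> \<in> {0..\<delta>}"
  shows "(a, a' - \<alpha>) \<in> dom_A A"
proof -
  have sub: "y - \<alpha> \<in> A" if "y \<in> A" "y - \<delta> \<in> A" for y
    using diff_mem_interval[OF A that \<alpha>] .
  have "a' - \<alpha> \<in> A" "a + (a' - \<alpha>) \<in> A"
    using p sub[of a'] sub[of "a + a'"] by (auto simp: dom_A_def algebra_simps)
  moreover have "t \<in> A" if "t \<in> {a' - \<alpha> - 1 .. a' - \<alpha> + 1}" for t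
    using p that sub[of "t + \<alpha>"] by (auto simp: dom_A_def subset_iff)
  ultimately show ?thesis by (auto simp: dom_A_def)
qed

lemma compact_dom_A_shift_image:
  fixes A :: "real set"
  assumes A: "is_interval A" and K: "compact K" "K \<subseteq> dom_A {y \<in> A. y - \<delta> \<in> A}"
  shows "compact ((\<lambda>q. (fst (fst q), snd (fst q) - snd q)) ` (K \<times> {0..\<delta>}))"
    and "(\<lambda>q. (fst (fst q), snd (fst q) - snd q)) ` (K \<times> {0..\<delta>}) \<subseteq> dom_A A"
proof -
  show "compact ((\<lambda>q. (fst (fst q), snd (fst q) - snd q)) ` (K \<times> {0..\<delta>}))"
    by (intro compact_continuous_image compact_Times K(1) compact_Icc continuous_intros)
  show "(\<lambda>q. (fst (fst q), snd (fst q) - snd q)) ` (K \<times> {0..\<delta>}) \<subseteq> dom_A A"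
  proof
    fix q assume "q \<in> (\<lambda>q. (fst (fst q), snd (fst q) - snd q)) ` (K \<times> {0..\<delta>})"
    then obtain a a' \<alpha> where "q = (a, a' - \<alpha>)" "(a, a') \<in> K" "\<alpha> \<in> {0..\<delta>}" by auto
    then show "q \<in> dom_A A" by (simp add: dom_A_shift[OF A subsetD[OF K(2)]])
  qed
qed

lemma S_eps_convolution_error_bound:
  fixes \<psi> :: "real \<Rightarrow> complex"
  assumes A: "is_interval A" "continuous_on A \<psi>" and \<theta>: "continuous_on UNIV \<theta>"
    and "0 \<le> \<delta>" and e: "N \<ge> 1" "0 \<le> e N" "e N \<le> 1"
    and p: "(a, a') \<in> dom_A {y \<in> A. y - \<delta> \<in> A}"
    and M: "\<And>\<alpha>. \<alpha> \<in> {0..\<delta>} \<Longrightarrow> \<bar>\<theta> \<alpha>\<bar> \<le> M"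
    and err: "\<And>\<alpha>. \<alpha> \<in> {0..\<delta>} \<Longrightarrow> norm (S_eps e \<psi> N (a, a' - \<alpha>) - \<psi> (a + (a' - \<alpha>))) \<le> \<epsilon>"
  shows "norm (S_eps e (convolution \<delta> \<theta> \<psi>) N (a, a') - convolution \<delta> \<theta> \<psi> (a + a')) \<le> M * \<epsilon> * \<delta>"
proof -
  have "a' + h_eps e N \<nu> \<in> {a' - 1..a' + 1}" if "\<nu> \<le> N" for \<nu>
    using abs_h_eps_le_one[where e=e, OF e that] by (auto simp: abs_le_iff)
  moreover have "{a' - 1..a' + 1} \<subseteq> {y \<in> A. y - \<delta> \<in> A}" using p by (simp add: dom_A_def)
  ultimately have "a' + h_eps e N \<nu> \<in> {y \<in> A. y - \<delta> \<in> A}" if "\<nu> \<le> N" for \<nu>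
    using that by blast
  moreover have "a + a' \<in> {y \<in> A. y - \<delta> \<in> A}" using p by (simp add: dom_A_def)
  ultimately have int: "((\<lambda>\<alpha>. complex_of_real (\<theta> \<alpha>) * (S_eps e \<psi> N (a, a' - \<alpha>) - \<psi> (a + (a' - \<alpha>))))
          has_integral (S_eps e (convolution \<delta> \<theta> \<psi>) N (a, a') - convolution \<delta> \<theta> \<psi> (a + a'))) {0..\<delta>}"
    by (rule S_eps_convolution_has_integral[OF A \<theta>])
  have "\<bar>\<theta> 0\<bar> \<le> M" "norm (S_eps e \<psi> N (a, a') - \<psi> (a + a')) \<le> \<epsilon>"
    using M[of 0] err[of 0] \<open>0 \<le> \<delta>\<close> by simp_all
  then have "0 \<le> M" "0 \<le> \<epsilon>" by (smt (verit) abs_ge_zero norm_ge_zero)+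
  have "norm (complex_of_real (\<theta> \<alpha>) * (S_eps e \<psi> N (a, a' - \<alpha>) - \<psi> (a + (a' - \<alpha>)))) \<le> M * \<epsilon>"
    if "\<alpha> \<in> {0..\<delta>}" for \<alpha>
    unfolding norm_mult norm_of_real using M[OF that] err[OF that] \<open>0 \<le> M\<close>
    by (intro mult_mono) auto
  from has_integral_bound_real[OF _ finite.emptyI int this] \<open>0 \<le> M\<close> \<open>0 \<le> \<epsilon>\<close> \<open>0 \<le> \<delta>\<close>
  show ?thesis by simp
qed

lemma convolution_supershift_estimate:
  fixes \<psi> :: "real \<Rightarrow> complex"
  assumes A: "is_interval A" "regular_supershift A \<psi>" and \<theta>: "continuous_on UNIV \<theta>" and "0 < \<delta>"
    and E: "\<forall>e\<in>E. admissible_seq e" "\<forall>\<eta>>0. \<forall>\<^sub>F N in sequentially. \<forall>e\<in>E. e N < \<eta>"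
    and K: "compact K" "K \<subseteq> dom_A {y \<in> A. y - \<delta> \<in> A}" and "\<eta> > 0"
  shows "\<forall>\<^sub>F N in sequentially. \<forall>e\<in>E. \<forall>p\<in>K.
           dist (S_eps e (convolution \<delta> \<theta> \<psi>) N p) (convolution \<delta> \<theta> \<psi> (fst p + snd p)) < \<eta>"
proof -
  have \<psi>: "continuous_on A \<psi>" using A(2) by (simp add: regular_supershift_def)
  have family: "\<forall>\<^sub>F N in sequentially. \<forall>e\<in>E. \<forall>q\<in>K'. dist (S_eps e \<psi> N q) (\<psi> (fst q + snd q)) < \<epsilon>"
    if "compact K'" "K' \<subseteq> dom_A A" "\<epsilon> > 0" for K' \<epsilon>
    using A(2) E that unfolding regular_supershift_def by blast
  have "bounded (\<theta> ` {0..\<delta>})"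
    by (intro compact_imp_bounded compact_continuous_image continuous_on_subset[OF \<theta>]) auto
  then obtain M where M: "M > 0" "\<And>\<alpha>. \<alpha> \<in> {0..\<delta>} \<Longrightarrow> \<bar>\<theta> \<alpha>\<bar> \<le> M"
    unfolding bounded_pos by auto
  define K' where "K' = (\<lambda>q. (fst (fst q), snd (fst q) - snd q)) ` (K \<times> {0..\<delta>})"
  note K' = compact_dom_A_shift_image[OF A(1) K, folded K'_def]
  define \<epsilon> where "\<epsilon> = \<eta> / (2 * M * \<delta>)"
  have \<epsilon>: "\<epsilon> > 0" "M * \<epsilon> * \<delta> < \<eta>"
    using M(1) \<open>0 < \<delta>\<close> \<open>\<eta> > 0\<close> by (simp_all add: \<epsilon>_def field_simps)
  note family[OF K' \<epsilon>(1)]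
  moreover have "\<forall>\<^sub>F N in sequentially. N \<ge> (1::nat)" by (rule eventually_ge_at_top)
  ultimately show ?thesis
  proof eventually_elim
    case (elim N)
    show ?case
    proof (intro ballI)
      fix e p assume e: "e \<in> E" and p: "p \<in> K"
      obtain a a' where pp: "p = (a, a')" by (cases p)
      have "0 \<le> e N \<and> e N < 1" using E(1) e elim(2) by (simp add: admissible_seq_def)
      then have eN: "0 \<le> e N" "e N \<le> 1" by simp_all
      have err: "norm (S_eps e \<psi> N (a, a' - \<alpha>) - \<psi> (a + (a' - \<alpha>))) \<le> \<epsilon>"
        if "\<alpha> \<in> {0..\<delta>}" for \<alpha>
      proof -
        have "(a, a' - \<alpha>) \<in> K'"
          unfolding K'_def by (rule rev_image_eqI[where x="((a, a'), \<alpha>)"]) (use p pp that in auto)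
        then have "dist (S_eps e \<psi> N (a, a' - \<alpha>)) (\<psi> (a + (a' - \<alpha>))) < \<epsilon>"
          using elim(1) e by fastforce
        then show ?thesis by (simp add: dist_norm)
      qed
      have "(a, a') \<in> dom_A {y \<in> A. y - \<delta> \<in> A}" using p pp K(2) by auto
      then have "norm (S_eps e (convolution \<delta> \<theta> \<psi>) N (a, a') - convolution \<delta> \<theta> \<psi> (a + a'))
          \<le> M * \<epsilon> * \<delta>"
        using S_eps_convolution_error_bound[OF A(1) \<psi> \<theta> _ elim(2) eN _ M(2) err] \<open>0 < \<delta>\<close> by simp
      with \<epsilon>(2) show "dist (S_eps e (convolution \<delta> \<theta> \<psi>) N p) (convolution \<delta> \<theta> \<psi> (fst p + snd p)) < \<eta>"
        by (simp add: pp dist_norm)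
    qed
  qed
qed

lemma regular_supershiftI:
  fixes \<psi> :: "real \<Rightarrow> complex"
  assumes "continuous_on A \<psi>"
    and family: "\<And>E K \<eta>. \<forall>e\<in>E. admissible_seq e \<Longrightarrow> \<forall>\<eta>>0. \<forall>\<^sub>F N in sequentially. \<forall>e\<in>E. e N < \<eta> \<Longrightarrow>
        compact K \<Longrightarrow> K \<subseteq> dom_A A \<Longrightarrow> \<eta> > 0 \<Longrightarrow>
        \<forall>\<^sub>F N in sequentially. \<forall>e\<in>E. \<forall>p\<in>K. dist (S_eps e \<psi> N p) (\<psi> (fst p + snd p)) < \<eta>"
  shows "regular_supershift A \<psi>"
proof -
  have "uniform_limit K (S_eps e \<psi>) (\<lambda>p. \<psi> (fst p + snd p)) sequentially"
    if e: "admissible_seq e" and K: "compact K" "K \<subseteq> dom_A A" for e K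
  proof -
    have "\<forall>\<eta>>0. \<forall>\<^sub>F N in sequentially. \<forall>e'\<in>{e}. e' N < \<eta>"
      using e by (auto simp: admissible_seq_def intro: order_tendstoD(2))
    then show ?thesis
      unfolding uniform_limit_iff using family[of "{e}" K] e K by auto
  qed
  with assms show ?thesis unfolding regular_supershift_def by blast
qed

lemma regular_supershift_convolution:
  fixes \<psi> :: "real \<Rightarrow> complex"
  assumes A: "open A" "is_interval A" "regular_supershift A \<psi>"
    and "0 < \<delta>" and \<theta>: "smooth_on UNIV \<theta>" "\<And>x. x \<notin> {0..\<delta>} \<Longrightarrow> \<theta> x = 0"
  shows "regular_supershift {a \<in> A. a - \<delta> \<in> A} (convolution \<delta> \<theta> \<psi>)"
proof (rule regular_supershiftI)
  have "continuous_on A \<psi>" using A(3) by (simp add: regular_supershift_def)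
  then show "continuous_on {a \<in> A. a - \<delta> \<in> A} (convolution \<delta> \<theta> \<psi>)"
    by (rule smooth_on_imp_continuous_on[OF smooth_on_convolution[OF A(1,2) _ \<theta>]])
next
  fix E K and \<eta> :: real
  assume "\<forall>e\<in>E. admissible_seq e" "\<forall>\<eta>>0. \<forall>\<^sub>F N in sequentially. \<forall>e\<in>E. e N < \<eta>"
    and "compact K" "K \<subseteq> dom_A {a \<in> A. a - \<delta> \<in> A}" "\<eta> > 0"
  then show "\<forall>\<^sub>F N in sequentially. \<forall>e\<in>E. \<forall>p\<in>K.
      dist (S_eps e (convolution \<delta> \<theta> \<psi>) N p) (convolution \<delta> \<theta> \<psi> (fst p + snd p)) < \<eta>"
    by (rule convolution_supershift_estimate[OF A(2,3) smooth_on_imp_continuous_on[OF \<theta>(1)] \<open>0 < \<delta>\<close>])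
qed

theorem mainTheorem4:
  fixes lo hi :: ereal and \<psi> :: "real \<Rightarrow> complex" and \<theta> :: "real \<Rightarrow> real" and \<delta> :: real
  assumes "hi - lo > 2"
    and "regular_supershift (ointerval lo hi) \<psi>"
    and "0 < \<delta>" and "ereal \<delta> < hi - lo - 2"
    and "smooth_on UNIV \<theta>"
    and "\<forall>x. x \<notin> {0..\<delta>} \<longrightarrow> \<theta> x = 0"
  shows "smooth_on {a \<in> ointerval lo hi. a - \<delta> \<in> ointerval lo hi}
           (\<lambda>a. integral {0..\<delta>} (\<lambda>\<alpha>. complex_of_real (\<theta> \<alpha>) * \<psi> (a - \<alpha>)))
       \<and> regular_supershift {a \<in> ointerval lo hi. a - \<delta> \<in> ointerval lo hi}
           (\<lambda>a. integral {0..\<delta>} (\<lambda>\<alpha>. complex_of_real (\<theta> \<alpha>) * \<psi> (a - \<alpha>)))"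
proof -
  \<comment> \<open>The length conditions on A and \<delta> only make A_\<delta> an interval of length > 2.\<close>
  let ?A = "ointerval lo hi"
  have \<psi>: "continuous_on ?A \<psi>" using assms(2) by (simp add: regular_supershift_def)
  have \<theta>: "\<And>x. x \<notin> {0..\<delta>} \<Longrightarrow> \<theta> x = 0" using assms(6) by blast
  have "smooth_on {a \<in> ?A. a - \<delta> \<in> ?A} (convolution \<delta> \<theta> \<psi>)"
    by (rule smooth_on_convolution[OF open_ointerval is_interval_ointerval \<psi> assms(5) \<theta>])
  moreover have "regular_supershift {a \<in> ?A. a - \<delta> \<in> ?A} (convolution \<delta> \<theta> \<psi>)"
    by (rule regular_supershift_convolution[OF open_ointerval is_interval_ointerval assms(2,3,5) \<theta>])
  ultimately show ?thesis unfolding convolution_def by blast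
qed

end
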